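(* Let $q \geq 4$ be a prime power and let $\mathcal{E} = \{ \widetilde{E}(u) : u \in \mathcal{D}_q \}$. Then \[ \theta(\mathcal{E}) = \begin{cases} 2(q-1) & \text{if } q-1 \not\equiv 0 \pmod 3,\\ 0 & \text{if } q-1 \equiv 0 \pmod 3. \end{cases} \] Equivalently, $\min\{ |\widetilde{E}(u) \cap \widetilde{E}(v)| : u,v \in \mathcal{D}_q\}$ equals $2(q-1)$ if $3 \nmid q-1$ and equals $0$ if $3 \mid q-1$.
   Context: $\mathbb{F}_q$ is the finite field with $q$ elements. For $u=(u_1,u_2,u_3), v=(v_1,v_2,v_3) \in \mathbb{F}_q^3$ the Hamming distance is $d(u,v)=|\{i : u_i \neq v_i\}|$, and $B(u)=\{v \in \mathbb{F}_q^3 : d(u,v)\le 1\}$. The extended ball of $u$ is $E(u)=\bigcup_{\lambda \in \mathbb{F}_q} B(\lambda u)$. Let $\mathcal{D}_q=\{(u_1,u_2,u_3)\in\mathbb{F}_q^3 : u_1,u_2,u_3 \text{ pairwise distinct and nonzero}\}$ and $\widetilde{E}(u)=E(u)\cap \mathcal{D}_q$. A family $\mathcal{F}=\{A_1,\dots,A_m\}$ of sets is $t$-intersecting if $|A_i\cap A_j|\ge t$ for all $i\ne j$, and $\theta(\mathcal{F})=\max\{t : \mathcal{F} \text{ is } t\text{-intersecting}\}$ (i.e. the minimum of $|A_i\cap A_j|$ over pairs of members, here indexed by pairs $u,v\in\mathcal{D}_q$). *)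

theory Defs
  imports Main "HOL-Library.Cardinality"
begin

type_synonym 'a vec3 = "'a \<times> 'a \<times> 'a"

definition coords :: "'a vec3 \<Rightarrow> 'a list" where
  "coords u = (case u of (a, b, c) \<Rightarrow> [a, b, c])"

definition hdist :: "'a vec3 \<Rightarrow> 'a vec3 \<Rightarrow> nat" where
  "hdist u v = card {i::nat. i < 3 \<and> coords u ! i \<noteq> coords v ! i}"

definition scale3 :: "'a::field \<Rightarrow> 'a vec3 \<Rightarrow> 'a vec3" where
  "scale3 l u = (case u of (a, b, c) \<Rightarrow> (l * a, l * b, l * c))"

definition hball :: "'a vec3 \<Rightarrow> 'a vec3 set" where
  "hball u = {v. hdist u v \<le> 1}"

definition ext_ball :: "'a::field vec3 \<Rightarrow> 'a vec3 set" where
  "ext_ball u = (\<Union>l. hball (scale3 l u))"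

definition Dq :: "'a::field vec3 set" where
  "Dq = {(a, b, c). a \<noteq> b \<and> b \<noteq> c \<and> a \<noteq> c \<and> a \<noteq> 0 \<and> b \<noteq> 0 \<and> c \<noteq> 0}"

definition ext_ball_D :: "'a::field vec3 \<Rightarrow> 'a vec3 set" where
  "ext_ball_D u = ext_ball u \<inter> Dq"

definition theta :: "'i set \<Rightarrow> ('i \<Rightarrow> 'b set) \<Rightarrow> nat" where
  "theta I A = Min {card (A i \<inter> A j) | i j. i \<in> I \<and> j \<in> I \<and> i \<noteq> j}"

end

theory Submission
  imports Defs "HOL-Computational_Algebra.Polynomial"
begin

text \<open>
  Scaling \<open>u\<close> does not change \<open>E(u)\<close>, and \<open>E(u)\<close> is closed under scaling its points,
  so it is a union of rays of \<open>q - 1\<close> points each. In the chart \<open>(1, g, h)\<close>, \<open>E(1, x, y)\<close>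
  consists of the points of \<open>D\<^sub>q\<close> on the lines \<open>g = x\<close>, \<open>h = y\<close> and \<open>g y = h x\<close>.
  For two points of \<open>D\<^sub>q\<close>, the intersections of a line of one triple with a line of the
  other are common points, and two distinct ones lie in \<open>D\<^sub>q\<close> unless the field contains a
  nontrivial cube root of unity, i.e. unless \<open>3\<close> divides \<open>q - 1\<close>; then every intersection
  contains two rays. Conversely, \<open>E(1, c, c\<^sup>2) \<inter> E(1, c\<^sup>2, c)\<close> lies in the rays through
  \<open>(1, c\<^sup>3, c\<^sup>2)\<close> and \<open>(1, c\<^sup>2, c\<^sup>3)\<close>, which miss \<open>D\<^sub>q\<close> when \<open>c\<^sup>3 = 1\<close>.
\<close>

lemma Dq_iff: "(a, b, c) \<in> Dq \<longleftrightarrow> a \<noteq> b \<and> b \<noteq> c \<and> a \<noteq> c \<and> a \<noteq> 0 \<and> b \<noteq> 0 \<and> c \<noteq> 0"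
  by (simp add: Dq_def)

lemma mem_hball_iff:
  "(a', b', c') \<in> hball (a, b, c) \<longleftrightarrow>
    (a = a' \<and> b = b') \<or> (a = a' \<and> c = c') \<or> (b = b' \<and> c = c')"
proof -
  have "{i::nat. i < 3 \<and> coords (a, b, c) ! i \<noteq> coords (a', b', c') ! i} =
      (if a \<noteq> a' then {0} else {}) \<union> (if b \<noteq> b' then {1} else {}) \<union> (if c \<noteq> c' then {2} else {})"
    by (auto simp: coords_def less_Suc_eq numeral_3_eq_3 split: if_splits)
  then show ?thesis
    unfolding hball_def hdist_def by (auto split: if_splits)
qed

lemma scale3_scale3: "scale3 l (scale3 m u) = scale3 (l * m) u"
  by (cases u) (simp add: scale3_def mult.assoc)

lemma scale3_in_hball_iff:
  assumes "l \<noteq> 0"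
  shows "scale3 l w \<in> hball (scale3 l u) \<longleftrightarrow> w \<in> hball u"
  using assms by (cases w; cases u) (simp add: scale3_def mem_hball_iff)

lemma scale3_in_Dq_iff:
  assumes "l \<noteq> 0"
  shows "scale3 l w \<in> Dq \<longleftrightarrow> w \<in> Dq"
  using assms by (cases w) (auto simp: Dq_def scale3_def)

lemma ext_ball_scale3:
  assumes "l \<noteq> 0"
  shows "ext_ball (scale3 l u) = ext_ball u"
proof -
  have "ext_ball (scale3 l u) = (\<Union>m\<in>range (\<lambda>m. m * l). hball (scale3 m u))"
    by (simp add: ext_ball_def scale3_scale3)
  also have "range (\<lambda>m. m * l) = UNIV"
    using assms by (intro surjI[of _ "\<lambda>m. m / l"]) simp
  finally show ?thesis
    by (simp add: ext_ball_def)
qed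

lemma scale3_in_ext_ball_D:
  assumes "w \<in> ext_ball_D u" "l \<noteq> 0"
  shows "scale3 l w \<in> ext_ball_D u"
proof -
  obtain m where "w \<in> hball (scale3 m u)" "w \<in> Dq"
    using assms(1) by (auto simp: ext_ball_D_def ext_ball_def)
  then have "scale3 l w \<in> hball (scale3 (l * m) u)" "scale3 l w \<in> Dq"
    using assms(2) by (simp_all add: scale3_in_hball_iff scale3_in_Dq_iff flip: scale3_scale3)
  then show ?thesis
    by (auto simp: ext_ball_D_def ext_ball_def)
qed

lemma mem_ext_ball_iff:
  fixes u1 u2 u3 :: "'a::field"
  assumes "u1 \<noteq> 0" "u2 \<noteq> 0" "u3 \<noteq> 0"
  shows "(w1, w2, w3) \<in> ext_ball (u1, u2, u3) \<longleftrightarrow>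
    w1 * u2 = w2 * u1 \<or> w2 * u3 = w3 * u2 \<or> w1 * u3 = w3 * u1"
proof -
  have "(w1, w2, w3) \<in> ext_ball (u1, u2, u3) \<longleftrightarrow>
      (\<exists>l. (l * u1 = w1 \<and> l * u2 = w2) \<or> (l * u1 = w1 \<and> l * u3 = w3) \<or>
        (l * u2 = w2 \<and> l * u3 = w3))"
    by (simp add: ext_ball_def scale3_def mem_hball_iff)
  also have "\<dots> \<longleftrightarrow> w1 * u2 = w2 * u1 \<or> w2 * u3 = w3 * u2 \<or> w1 * u3 = w3 * u1"
  proof
    assume "w1 * u2 = w2 * u1 \<or> w2 * u3 = w3 * u2 \<or> w1 * u3 = w3 * u1"
    then show "\<exists>l. (l * u1 = w1 \<and> l * u2 = w2) \<or> (l * u1 = w1 \<and> l * u3 = w3) \<or>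
      (l * u2 = w2 \<and> l * u3 = w3)"
    proof (elim disjE)
      assume "w1 * u2 = w2 * u1"
      then show ?thesis
        using assms by (intro exI[of _ "w1 / u1"]) (simp add: field_simps)
    next
      assume "w2 * u3 = w3 * u2"
      then show ?thesis
        using assms by (intro exI[of _ "w2 / u2"]) (simp add: field_simps)
    next
      assume "w1 * u3 = w3 * u1"
      then show ?thesis
        using assms by (intro exI[of _ "w1 / u1"]) (simp add: field_simps)
    qed
  qed (auto simp: mult_ac)
  finally show ?thesis .
qed

lemma ext_ball_D_chart:
  fixes u1 :: "'a::field"
  assumes "(u1, u2, u3) \<in> Dq"
  shows "(1, u2 / u1, u3 / u1) \<in> Dq \<and>
    ext_ball_D (u1, u2, u3) = ext_ball_D (1, u2 / u1, u3 / u1)"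
proof -
  define w where "w = (1 :: 'a, u2 / u1, u3 / u1)"
  have "u1 \<noteq> 0"
    using assms by (simp add: Dq_iff)
  then have u: "(u1, u2, u3) = scale3 u1 w"
    by (simp add: scale3_def w_def)
  have "w \<in> Dq"
    using assms \<open>u1 \<noteq> 0\<close> by (metis u scale3_in_Dq_iff)
  moreover have "ext_ball_D (u1, u2, u3) = ext_ball_D w"
    by (simp only: ext_ball_D_def u ext_ball_scale3[OF \<open>u1 \<noteq> 0\<close>])
  ultimately show ?thesis
    by (simp add: w_def)
qed

lemma mem_chart_ext_ball_D_iff:
  assumes "(1, x, y) \<in> Dq"
  shows "(1, g, h) \<in> ext_ball_D (1, x, y) \<longleftrightarrow>
    (1, g, h) \<in> Dq \<and> (g = x \<or> g * y = h * x \<or> h = y)"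
proof -
  have "x \<noteq> 0" "y \<noteq> 0"
    using assms by (simp_all add: Dq_iff)
  then have "(1, g, h) \<in> ext_ball (1, x, y) \<longleftrightarrow> g = x \<or> g * y = h * x \<or> h = y"
    using mem_ext_ball_iff[of 1 x y 1 g h] by auto
  then show ?thesis
    by (auto simp: ext_ball_D_def)
qed

definition has_two_chart_points :: "'a::field vec3 set \<Rightarrow> bool" where
  "has_two_chart_points X \<longleftrightarrow>
    (\<exists>g h g' h'. (g, h) \<noteq> (g', h') \<and> (1, g, h) \<in> X \<and> (1, g', h') \<in> X)"

lemma has_two_chart_pointsI:
  "(g, h) \<noteq> (g', h') \<Longrightarrow> (1, g, h) \<in> X \<Longrightarrow> (1, g', h') \<in> X \<Longrightarrow> has_two_chart_points X"
  unfolding has_two_chart_points_def by blast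

lemma has_two_chart_points_diagonal:
  fixes x y p :: "'a::field"
  assumes cube_root: "\<And>z::'a. z ^ 3 = 1 \<Longrightarrow> z = 1"
    and u: "(1, x, y) \<in> Dq" and v: "(1, p, x) \<in> Dq"
  shows "has_two_chart_points (ext_ball_D (1, x, y) \<inter> ext_ball_D (1, p, x))"
proof -
  have nz: "x \<noteq> 0" "y \<noteq> 0" "p \<noteq> 0" "x \<noteq> 1" "y \<noteq> 1" "p \<noteq> 1" "x \<noteq> y" "p \<noteq> x"
    using u v by (auto simp: Dq_iff)
  have mem: "(1, g, h) \<in> ext_ball_D (1, x, y) \<inter> ext_ball_D (1, p, x) \<longleftrightarrow>
      g \<noteq> 0 \<and> h \<noteq> 0 \<and> g \<noteq> 1 \<and> h \<noteq> 1 \<and> g \<noteq> h \<and>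
      (g = x \<or> g * y = h * x \<or> h = y) \<and> (g = p \<or> g * x = h * p \<or> h = x)" for g h
    using u v by (auto simp: mem_chart_ext_ball_D_iff Dq_iff)
  consider "p * y \<noteq> x" | "p * y = x" "x * x \<noteq> p" "x * x \<noteq> y"
    | "p * y = x" "x * x = p" | "p * y = x" "x * x = y"
    by blast
  then show ?thesis
  proof cases
    case 1
    show ?thesis
      using 1 nz
      by (intro has_two_chart_pointsI[of p "p * y / x" "p * y / x" y]; simp only: mem)
        (auto simp: field_simps)
  next
    case 2
    show ?thesis
      using 2 nz
      by (intro has_two_chart_pointsI[of x "x * x / p" "x * x / y" x]; simp only: mem)
        (auto simp: field_simps)
  next
    case 3
    have "p \<noteq> y"
    proof
      assume "p = y"
      then have "p ^ 3 = 1"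
        using 3 nz by (auto simp: power3_eq_cube field_simps)
      then show False
        using cube_root nz by blast
    qed
    show ?thesis
      using 3 \<open>p \<noteq> y\<close> nz
      by (intro has_two_chart_pointsI[of p y "x * x / y" x]; simp only: mem)
        (auto simp: field_simps)
  next
    case 4
    have "p \<noteq> y"
    proof
      assume "p = y"
      then have "x ^ 3 = 1"
        using 4 nz by (auto simp: power3_eq_cube field_simps)
      then show False
        using cube_root nz by blast
    qed
    show ?thesis
      using 4 \<open>p \<noteq> y\<close> nz
      by (intro has_two_chart_pointsI[of p y x "x * x / p"]; simp only: mem)
        (auto simp: field_simps)
  qed
qed

lemma has_two_chart_points_common:
  fixes x y p r :: "'a::field"
  assumes cube_root: "\<And>z::'a. z ^ 3 = 1 \<Longrightarrow> z = 1"
    and u: "(1, x, y) \<in> Dq" and v: "(1, p, r) \<in> Dq" and uv: "(x, y) \<noteq> (p, r)"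
  shows "has_two_chart_points (ext_ball_D (1, x, y) \<inter> ext_ball_D (1, p, r))"
proof -
  consider "x = r" | "p = y" | "x \<noteq> r" "p \<noteq> y"
    by blast
  then show ?thesis
  proof cases
    case 1
    then show ?thesis
      using has_two_chart_points_diagonal[OF cube_root u] v by simp
  next
    case 2
    then show ?thesis
      using has_two_chart_points_diagonal[OF cube_root v] u by (simp add: Int_commute)
  next
    case 3
    have "(1, x, r) \<in> ext_ball_D (1, x, y) \<inter> ext_ball_D (1, p, r)"
      and "(1, p, y) \<in> ext_ball_D (1, x, y) \<inter> ext_ball_D (1, p, r)"
      using 3 u v by (auto simp: mem_chart_ext_ball_D_iff Dq_iff)
    moreover have "(x, r) \<noteq> (p, y)"
      using uv by auto
    ultimately show ?thesis
      by (intro has_two_chart_pointsI[of x r p y])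
  qed
qed

lemma has_two_chart_points_ext_ball_D:
  assumes "(1, x, y) \<in> Dq" "z \<notin> {0, 1, x, y}"
  shows "has_two_chart_points (ext_ball_D (1, x, y))"
proof (rule has_two_chart_pointsI[of x y z y])
  show "(x, y) \<noteq> (z, y)" "(1, x, y) \<in> ext_ball_D (1, x, y)"
    "(1, z, y) \<in> ext_ball_D (1, x, y)"
    using assms by (auto simp: mem_chart_ext_ball_D_iff Dq_iff)
qed

definition ray :: "'a::field vec3 \<Rightarrow> 'a vec3 set" where
  "ray w = (\<lambda>l. scale3 l w) ` (UNIV - {0})"

lemma card_ray_chart: "card (ray (1, g, h) :: 'a::{finite, field} vec3 set) = CARD('a) - 1"
proof -
  have "inj_on (\<lambda>l. scale3 l (1, g, h)) (UNIV - {0 :: 'a})"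
    by (auto simp: inj_on_def scale3_def)
  then show ?thesis
    by (simp add: ray_def card_image card_Diff_subset)
qed

lemma card_ge_if_has_two_chart_points:
  fixes X :: "'a::{finite, field} vec3 set"
  assumes scale_closed: "\<And>l w. l \<noteq> 0 \<Longrightarrow> w \<in> X \<Longrightarrow> scale3 l w \<in> X"
    and "has_two_chart_points X"
  shows "2 * (CARD('a) - 1) \<le> card X"
proof -
  obtain g h g' h' where gh: "(g, h) \<noteq> (g', h')" "(1, g, h) \<in> X" "(1, g', h') \<in> X"
    using assms(2) by (auto simp: has_two_chart_points_def)
  have "ray (1, g, h) \<inter> ray (1, g', h') = {}"
    using gh(1) by (auto simp: ray_def scale3_def)
  then have "card (ray (1, g, h) \<union> ray (1, g', h')) = 2 * (CARD('a) - 1)"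
    by (simp add: card_Un_disjoint card_ray_chart)
  moreover have "ray (1, g, h) \<union> ray (1, g', h') \<subseteq> X"
    using gh(2,3) scale_closed unfolding ray_def by blast
  ultimately show ?thesis
    by (metis card_mono finite)
qed

lemma exists_not_in_if_card_less:
  fixes A :: "'a::finite set"
  assumes "card A < CARD('a)"
  obtains z where "z \<notin> A"
  using assms by (metis UNIV_I card_mono finite not_less subsetI)

lemma card_ext_ball_D_Int_ge:
  fixes u v :: "'a::{finite, field} vec3"
  assumes cube_root: "\<And>z::'a. z ^ 3 = 1 \<Longrightarrow> z = 1"
    and q: "CARD('a) \<ge> 5" and "u \<in> Dq" "v \<in> Dq"
  shows "2 * (CARD('a) - 1) \<le> card (ext_ball_D u \<inter> ext_ball_D v)"
proof -
  obtain x y where u: "(1, x, y) \<in> Dq" "ext_ball_D u = ext_ball_D (1, x, y)"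
    using ext_ball_D_chart \<open>u \<in> Dq\<close> by (cases u) blast
  obtain p r where v: "(1, p, r) \<in> Dq" "ext_ball_D v = ext_ball_D (1, p, r)"
    using ext_ball_D_chart \<open>v \<in> Dq\<close> by (cases v) blast
  have "has_two_chart_points (ext_ball_D (1, x, y) \<inter> ext_ball_D (1, p, r))"
  proof (cases "(x, y) = (p, r)")
    case True
    have "card {0, 1, x, y} < CARD('a)"
      using card_length[of "[0, 1, x, y]"] q by simp
    then obtain z where "z \<notin> {0, 1, x, y}"
      by (rule exists_not_in_if_card_less)
    then show ?thesis
      using has_two_chart_points_ext_ball_D[OF u(1)] True by simp
  next
    case False
    then show ?thesis
      using has_two_chart_points_common[OF cube_root u(1) v(1)] by blast
  qed
  then show ?thesis
    unfolding u v by (intro card_ge_if_has_two_chart_points) (auto intro: scale3_in_ext_ball_D)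
qed

lemma witness_common_subset:
  fixes c :: "'a::field"
  assumes "(1, c, c\<^sup>2) \<in> Dq"
  shows "ext_ball_D (1, c, c\<^sup>2) \<inter> ext_ball_D (1, c\<^sup>2, c) \<subseteq>
    ray (1, c ^ 3, c\<^sup>2) \<union> ray (1, c\<^sup>2, c ^ 3)"
proof
  fix w
  assume w: "w \<in> ext_ball_D (1, c, c\<^sup>2) \<inter> ext_ball_D (1, c\<^sup>2, c)"
  obtain w1 w2 w3 where w_def: "w = (w1, w2, w3)"
    by (cases w)
  have c: "c \<noteq> 0" "c \<noteq> 1" "c * c \<noteq> 1"
    using assms by (auto simp: Dq_iff power2_eq_square)
  have d: "w1 \<noteq> w2" "w2 \<noteq> w3" "w1 \<noteq> w3" "w1 \<noteq> 0" "w2 \<noteq> 0" "w3 \<noteq> 0"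
    using w by (auto simp: w_def ext_ball_D_def Dq_iff)
  have "w1 * c = w2 \<or> w2 * (c * c) = w3 * c \<or> w1 * (c * c) = w3"
    and "w1 * (c * c) = w2 \<or> w2 * c = w3 * (c * c) \<or> w1 * c = w3"
    using w c by (auto simp: w_def ext_ball_D_def mem_ext_ball_iff power2_eq_square)
  then have "(w2 = c * c * c * w1 \<and> w3 = c * c * w1) \<or> (w2 = c * c * w1 \<and> w3 = c * c * c * w1)"
    using c d by (elim disjE) (auto simp: field_simps)
  then show "w \<in> ray (1, c ^ 3, c\<^sup>2) \<union> ray (1, c\<^sup>2, c ^ 3)"
    using d by (auto simp: ray_def scale3_def w_def power2_eq_square power3_eq_cube mult_ac
        intro!: image_eqI[of _ _ w1])
qed

lemma ext_ball_D_witness_Int_eq_empty: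
  fixes c :: "'a::field"
  assumes "(1, c, c\<^sup>2) \<in> Dq" "c ^ 3 = 1"
  shows "ext_ball_D (1, c, c\<^sup>2) \<inter> ext_ball_D (1, c\<^sup>2, c) = {}"
proof -
  have "ray (1, c ^ 3, c\<^sup>2) \<inter> Dq = {}" "ray (1, c\<^sup>2, c ^ 3) \<inter> Dq = {}"
    using assms(2) by (auto simp: ray_def scale3_def Dq_iff)
  moreover have "ext_ball_D (1, c, c\<^sup>2) \<subseteq> Dq"
    by (simp add: ext_ball_D_def)
  ultimately show ?thesis
    using witness_common_subset[OF assms(1)] by blast
qed

lemma card_witness_Int_le:
  fixes c :: "'a::{finite, field}"
  assumes "(1, c, c\<^sup>2) \<in> Dq"
  shows "card (ext_ball_D (1, c, c\<^sup>2) \<inter> ext_ball_D (1, c\<^sup>2, c)) \<le> 2 * (CARD('a) - 1)"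
proof -
  have "card (ext_ball_D (1, c, c\<^sup>2) \<inter> ext_ball_D (1, c\<^sup>2, c)) \<le>
      card (ray (1, c ^ 3, c\<^sup>2) \<union> ray (1, c\<^sup>2, c ^ 3))"
    using witness_common_subset[OF assms] by (intro card_mono) auto
  also have "\<dots> \<le> card (ray (1, c ^ 3, c\<^sup>2)) + card (ray (1, c\<^sup>2, c ^ 3))"
    by (rule card_Un_le)
  finally show ?thesis
    by (simp add: card_ray_chart)
qed

lemma power_card_minus_1_eq_1:
  fixes x :: "'a::{finite, field}"
  assumes "x \<noteq> 0"
  shows "x ^ (CARD('a) - 1) = 1"
proof -
  let ?N = "UNIV - {0::'a}"
  have "(\<Prod>y\<in>?N. x * y) = (\<Prod>y\<in>?N. y)"
    by (rule prod.reindex_bij_witness[of _ "\<lambda>y. y / x" "\<lambda>y. x * y"]) (use assms in auto)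
  moreover have "(\<Prod>y\<in>?N. x * y) = x ^ (CARD('a) - 1) * (\<Prod>y\<in>?N. y)"
    by (simp add: prod.distrib card_Diff_subset)
  moreover have "(\<Prod>y\<in>?N. y) \<noteq> 0"
    by (simp add: prod_zero_iff)
  ultimately show ?thesis
    by simp
qed

lemma cube_roots_of_unity_trivial_iff:
  "(\<forall>z::'a::{finite, field}. z ^ 3 = 1 \<longrightarrow> z = 1) \<longleftrightarrow> \<not> 3 dvd (CARD('a) - 1)"
proof
  assume cube_root: "\<forall>z::'a. z ^ 3 = 1 \<longrightarrow> z = 1"
  show "\<not> 3 dvd (CARD('a) - 1)"
  proof
    assume "3 dvd (CARD('a) - 1)"
    then obtain m where m: "CARD('a) - 1 = 3 * m"
      by blast
    let ?N = "UNIV - {0::'a}"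
    have "card {0, 1::'a} \<le> CARD('a)"
      by (rule card_mono) auto
    then have "m \<ge> 1"
      using m by simp
    have "inj_on (\<lambda>c. c ^ 3) ?N"
    proof (rule inj_onI)
      fix a b
      assume "a \<in> ?N" "b \<in> ?N" "a ^ 3 = b ^ 3"
      then have "(a / b) ^ 3 = 1"
        by (simp add: power_divide)
      then have "a / b = 1"
        using cube_root by blast
      then show "a = b"
        using \<open>b \<in> ?N\<close> by simp
    qed
    moreover have "(\<lambda>c. c ^ 3) ` ?N \<subseteq> ?N"
      by auto
    ultimately have cubes: "(\<lambda>c. c ^ 3) ` ?N = ?N"
      by (intro card_subset_eq) (auto simp: card_image)
    \<comment> \<open>hence all \<open>3 * m\<close> nonzero elements are roots of \<open>X ^ m - 1\<close>\<close>
    have roots: "?N \<subseteq> {y. poly (monom 1 m - 1) y = 0}"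
    proof
      fix y
      assume "y \<in> ?N"
      then obtain c where c: "c \<in> ?N" "y = c ^ 3"
        using cubes by blast
      then have "y ^ m = 1"
        using power_card_minus_1_eq_1[of c] m by (simp flip: power_mult)
      then show "y \<in> {y. poly (monom 1 m - 1) y = 0}"
        by (simp add: poly_monom)
    qed
    have nonzero: "monom (1::'a) m - 1 \<noteq> 0"
    proof
      assume "monom (1::'a) m - 1 = 0"
      then have "poly (monom (1::'a) m - 1) 0 = 0"
        by simp
      then show False
        using \<open>m \<ge> 1\<close> by (simp add: poly_monom power_0_left)
    qed
    have "3 * m \<le> card {y. poly (monom (1::'a) m - 1) y = 0}"
      using card_mono[OF _ roots] m by (simp add: card_Diff_subset)
    also have "\<dots> \<le> degree (monom (1::'a) m - 1)"
      by (rule card_poly_roots_bound[OF nonzero])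
    also have "\<dots> \<le> m"
      by (intro degree_diff_le) (auto simp: degree_monom_le)
    finally show False
      using \<open>m \<ge> 1\<close> by simp
  qed
next
  assume not_dvd: "\<not> 3 dvd (CARD('a) - 1)"
  show "\<forall>z::'a. z ^ 3 = 1 \<longrightarrow> z = 1"
  proof (intro allI impI)
    fix z :: 'a
    assume z: "z ^ 3 = 1"
    have "z \<noteq> 0"
      using z by auto
    define n where "n = CARD('a) - 1"
    have "z ^ (n mod 3) = (z ^ 3) ^ (n div 3) * z ^ (n mod 3)"
      unfolding z by simp
    also have "\<dots> = z ^ n"
      by (simp flip: power_mult power_add)
    also have "\<dots> = 1"
      unfolding n_def by (rule power_card_minus_1_eq_1[OF \<open>z \<noteq> 0\<close>])
    finally have "z ^ (n mod 3) = 1" .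
    have "n mod 3 \<noteq> 0"
      using not_dvd by (simp add: n_def dvd_eq_mod_eq_0)
    then have "n mod 3 = 1 \<or> n mod 3 = 2"
      by presburger
    then show "z = 1"
      using \<open>z ^ (n mod 3) = 1\<close> z by (auto simp: power2_eq_square power3_eq_cube)
  qed
qed

lemma theta_eqI:
  assumes "finite I" "i \<in> I" "j \<in> I" "i \<noteq> j" "card (A i \<inter> A j) = m"
    and "\<And>i j. i \<in> I \<Longrightarrow> j \<in> I \<Longrightarrow> i \<noteq> j \<Longrightarrow> m \<le> card (A i \<inter> A j)"
  shows "theta I A = m"
proof -
  have "finite {card (A i \<inter> A j) | i j. i \<in> I \<and> j \<in> I \<and> i \<noteq> j}"
    by (rule finite_subset[of _ "(\<lambda>(i, j). card (A i \<inter> A j)) ` (I \<times> I)"])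
      (use assms(1) in auto)
  then show ?thesis
    unfolding theta_def using assms(2-6) by (intro Min_eqI) auto
qed

theorem theorem1:
  assumes "CARD('a) \<ge> 4"
  shows "theta (Dq :: ('a::{finite, field}) vec3 set) ext_ball_D =
           (if (CARD('a) - 1) mod 3 \<noteq> 0 then 2 * (CARD('a) - 1) else 0)"
proof (cases "3 dvd (CARD('a) - 1)")
  case True
  then obtain c :: 'a where c: "c ^ 3 = 1" "c \<noteq> 1"
    using cube_roots_of_unity_trivial_iff by blast
  then have "(1, c, c\<^sup>2) \<in> Dq"
    by (auto simp: Dq_iff power2_eq_square power3_eq_cube)
  then have "theta (Dq :: 'a vec3 set) ext_ball_D = 0"
    using ext_ball_D_witness_Int_eq_empty[OF _ c(1)]
    by (intro theta_eqI[of _ "(1, c, c\<^sup>2)" "(1, c\<^sup>2, c)"]) (auto simp: Dq_iff)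
  then show ?thesis
    using True by simp
next
  case False
  then have cube_root: "\<And>z::'a. z ^ 3 = 1 \<Longrightarrow> z = 1"
    using cube_roots_of_unity_trivial_iff by blast
  have q: "CARD('a) \<ge> 5"
    using assms False by (cases "CARD('a) = 4") auto
  then have "card {0, 1, -1::'a} < CARD('a)"
    using card_length[of "[0, 1, -1::'a]"] by simp
  then obtain c :: 'a where "c \<notin> {0, 1, -1}"
    by (rule exists_not_in_if_card_less)
  then have c: "(1, c, c\<^sup>2) \<in> Dq"
    by (auto simp: Dq_iff power2_eq_square square_eq_1_iff)
  have "theta (Dq :: 'a vec3 set) ext_ball_D = 2 * (CARD('a) - 1)"
    using card_witness_Int_le[OF c] card_ext_ball_D_Int_ge[OF cube_root q] c
    by (intro theta_eqI[of _ "(1, c, c\<^sup>2)" "(1, c\<^sup>2, c)"]) (auto simp: Dq_iff intro: order_antisym)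
  then show ?thesis
    using False by (simp add: dvd_eq_mod_eq_0)
qed

end
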